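(* Consider the SMCP instance with $|V|=4$ and $p_{uv}=p=0.64$ for all six pairs. The maximum, over all online algorithms, of the expected size of the matching produced equals $$p+p^2+(1-p)p(1+p)+(1-p)^2p(1+p)+(1-p)^3\big(1-(1-p)^3\big)\approx 1.607.$$
   Context: SMCP: vertex set $V$, probabilities $p_{uv}$ for unordered pairs; the random graph $G$ contains each pair independently with probability $p_{uv}$. An online algorithm knows $V$ and the $p_{uv}$ but not $G$; it repeatedly (adaptively, possibly randomly) probes a not-yet-probed pair of currently unmatched vertices; if the pair is an edge of $G$ it must be added to the matching and both endpoints become matched, otherwise both remain available. *)

theory Defs
  imports "HOL-Probability.Probability"
begin

(* A history is the list of probes so far: (pair, outcome). *)

definition smcp_pairs :: "nat set \<Rightarrow> nat set set" where
  "smcp_pairs V = {e. e \<subseteq> V \<and> card e = 2}"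

type_synonym history = "(nat set \<times> bool) list"

definition matched :: "history \<Rightarrow> nat set" where
  "matched h = \<Union>{e. (e, True) \<in> set h}"

definition matching_size :: "history \<Rightarrow> nat" where
  "matching_size h = card {e. (e, True) \<in> set h}"

(* A (possibly randomized, adaptive) online algorithm: given the history of probes and
   their outcomes, it chooses (randomly) either to stop (None) or to probe a pair (Some e).
   Randomization is behavioural: fresh randomness at every step. *)
type_synonym algorithm = "history \<Rightarrow> nat set option pmf"

definition valid_alg :: "nat set \<Rightarrow> algorithm \<Rightarrow> bool" where
  "valid_alg V A \<longleftrightarrow> (\<forall>h. \<forall>c \<in> set_pmf (A h). \<forall>e. c = Some e \<longrightarrow>
      e \<in> smcp_pairs V \<and> e \<notin> fst ` set h \<and> e \<inter> matched h = {})"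

primrec run :: "algorithm \<Rightarrow> (nat set \<Rightarrow> bool) \<Rightarrow> nat \<Rightarrow> history \<Rightarrow> history pmf" where
  "run A G 0 h = return_pmf h"
| "run A G (Suc n) h = bind_pmf (A h) (\<lambda>c. case c of
       None \<Rightarrow> return_pmf h
     | Some e \<Rightarrow> run A G n (h @ [(e, G e)]))"

definition random_graph :: "nat set \<Rightarrow> real \<Rightarrow> (nat set \<Rightarrow> bool) pmf" where
  "random_graph V p = Pi_pmf (smcp_pairs V) False (\<lambda>_. bernoulli_pmf p)"

(* expected matching size; card (smcp_pairs V) steps suffice since a valid algorithm
   never probes a pair twice *)
definition alg_value :: "nat set \<Rightarrow> real \<Rightarrow> algorithm \<Rightarrow> real" where
  "alg_value V p A = measure_pmf.expectation (random_graph V p)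
     (\<lambda>G. measure_pmf.expectation (run A G (card (smcp_pairs V)) []) (\<lambda>h. real (matching_size h)))"

end

theory Submission
  imports Defs
begin

(*
  An online algorithm for stochastic matching with commitment is governed by a
  Bellman recursion on the set R of pairs that can still be probed (unprobed and disjoint from
  the matching built so far): probing e in R succeeds with probability p, gains one edge and
  leaves the pairs of R disjoint from e; otherwise it leaves R - {e}.

  The first part holds for an arbitrary finite vertex set V and probability p in [0,1]:
  (1) by the principle of deferred decisions, running an algorithm on the random graph is the
      same as revealing each pair only at the moment it is probed;
  (2) every nonnegative W dominating all one-step Bellman averages (a supersolution) bounds
      the expected matching size of every valid algorithm by W (smcp_pairs V);
  (3) if moreover every nonempty R has a pair attaining W R, the greedy policy that probes
      such a pair achieves W (smcp_pairs V) exactly.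
  The second part treats four vertices: the six pairs form three perfect matchings
  {e, {0..<4} - e}, and the optimal value of R depends only on how many pairs of R have their
  partner in R and how many do not.  This two-parameter recursion is a supersolution that
  attains its maximum, and evaluating it at p = 16/25 gives the value in lemma6.
*)

(* Fubini for a pmf bind; boundedness on the reachable outcomes replaces integrability. *)
lemma expectation_bind_pmf:
  fixes \<phi> :: "'b \<Rightarrow> real"
  assumes bounded: "\<And>x y. x \<in> set_pmf M \<Longrightarrow> y \<in> set_pmf (f x) \<Longrightarrow> \<bar>\<phi> y\<bar> \<le> B"
  shows "measure_pmf.expectation (bind_pmf M f) \<phi> =
         measure_pmf.expectation M (\<lambda>x. measure_pmf.expectation (f x) \<phi>)"
proof -
  define S where "S = set_pmf (bind_pmf M f)"
  define \<psi> where "\<psi> y = (if y \<in> S then \<phi> y else 0)" for y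
  obtain y0 where "y0 \<in> S" unfolding S_def using set_pmf_not_empty[of "bind_pmf M f"] by blast
  then obtain x0 where "x0 \<in> set_pmf M" "y0 \<in> set_pmf (f x0)" unfolding S_def by auto
  then have "0 \<le> B" using bounded[of x0 y0] by linarith
  then have \<psi>_bounded: "\<bar>\<psi> y\<bar> \<le> B" for y using bounded by (auto simp: \<psi>_def S_def)
  have lhs: "measure_pmf.expectation (bind_pmf M f) \<phi> = measure_pmf.expectation (bind_pmf M f) \<psi>"
    by (rule integral_cong_AE) (auto intro!: AE_pmfI simp: \<psi>_def S_def)
  have rhs: "measure_pmf.expectation M (\<lambda>x. measure_pmf.expectation (f x) \<phi>) =
             measure_pmf.expectation M (\<lambda>x. measure_pmf.expectation (f x) \<psi>)"
    by (rule integral_cong_AE) (auto intro!: AE_pmfI integral_cong_AE simp: \<psi>_def S_def)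
  have "integral\<^sup>L (measure_pmf M \<bind> (\<lambda>x. measure_pmf (f x))) \<psi> =
        \<integral>x. integral\<^sup>L (measure_pmf (f x)) \<psi> \<partial>measure_pmf M"
  proof (rule integral_bind[where K="count_space UNIV" and B=B and B'=1])
    show "(\<lambda>x. measure_pmf (f x)) \<in> measurable (measure_pmf M) (subprob_algebra (count_space UNIV))"
      by (simp add: measure_subprob)
    show "finite_measure (measure_pmf M)"
      using measure_pmf.prob_space_axioms by (simp add: prob_space_def)
    show "AE x in measure_pmf M. emeasure (measure_pmf (f x)) (space (measure_pmf (f x))) \<le> ennreal 1"
      by (simp add: measure_pmf.emeasure_space_1)
  qed (use \<psi>_bounded in simp_all)
  then show ?thesis using lhs rhs by (simp add: measure_pmf_bind)
qed

lemma matched_append: "matched (h @ [(e, b)]) = (if b then matched h \<union> e else matched h)"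
  by (auto simp: matched_def)

lemma matching_size_append_False: "matching_size (h @ [(e, False)]) = matching_size h"
  by (simp add: matching_size_def)

lemma matching_size_append_True:
  assumes "e \<notin> fst ` set h"
  shows "matching_size (h @ [(e, True)]) = matching_size h + 1"
proof -
  have succ: "{x. (x, True) \<in> set (h @ [(e, True)])} = insert e {x. (x, True) \<in> set h}" by auto
  have "finite {x. (x, True) \<in> set h}" by (rule finite_subset[of _ "fst ` set h"]) force+
  moreover have "e \<notin> {x. (x, True) \<in> set h}" using assms by force
  ultimately show ?thesis unfolding matching_size_def succ by simp
qed

lemma matching_size_le_length: "matching_size h \<le> length h"
proof -
  have "card {e. (e, True) \<in> set h} \<le> card (fst ` set h)" by (intro card_mono) force+
  also have "\<dots> \<le> length h" using card_image_le card_length le_trans by blast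
  finally show ?thesis by (simp add: matching_size_def)
qed

lemma run_length: "y \<in> set_pmf (run A G n h) \<Longrightarrow> length y \<le> length h + n"
  by (induction n arbitrary: h) (fastforce split: option.splits)+

lemma finite_smcp_pairs: "finite V \<Longrightarrow> finite (smcp_pairs V)"
  unfolding smcp_pairs_def by (rule finite_subset[of _ "Pow V"]) auto

lemma smcp_pair_nonempty: "e \<in> smcp_pairs V \<Longrightarrow> e \<noteq> {}"
  by (auto simp: smcp_pairs_def)

section \<open>Deferred decisions\<close>

definition unprobed :: "nat set \<Rightarrow> history \<Rightarrow> nat set set" where
  "unprobed V h = smcp_pairs V - fst ` set h"

definition reveal :: "nat set \<Rightarrow> history \<Rightarrow> (nat set \<Rightarrow> bool) \<Rightarrow> (nat set \<Rightarrow> bool) \<Rightarrow> nat set \<Rightarrow> bool"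
  where "reveal V h G0 G = (\<lambda>x. if x \<in> unprobed V h then G x else G0 x)"

(* The continuation of a run after history h, when the probed pairs are fixed by G0 and the
   unprobed ones are still random.  This is the quantity the Bellman recursion speaks about. *)
definition deferred ::
    "nat set \<Rightarrow> real \<Rightarrow> algorithm \<Rightarrow> history \<Rightarrow> (nat set \<Rightarrow> bool) \<Rightarrow> nat \<Rightarrow> history pmf" where
  "deferred V p A h G0 n =
     bind_pmf (Pi_pmf (unprobed V h) False (\<lambda>_. bernoulli_pmf p)) (\<lambda>G. run A (reveal V h G0 G) n h)"

abbreviation msize :: "history \<Rightarrow> real" where
  "msize h \<equiv> real (matching_size h)"

lemma deferred_length: "y \<in> set_pmf (deferred V p A h G0 n) \<Longrightarrow> length y \<le> length h + n"
  unfolding deferred_def using run_length by fastforce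

lemma msize_deferred_bounded:
  assumes "y \<in> set_pmf (deferred V p A h G0 n)"
  shows "\<bar>msize y\<bar> \<le> real (length h + n)"
proof -
  have "matching_size y \<le> length h + n"
    using deferred_length[OF assms] matching_size_le_length[of y] by linarith
  then show ?thesis by simp
qed

lemma deferred_0: "deferred V p A h G0 0 = return_pmf h"
  by (simp add: deferred_def)

(* the algorithm's decision does not depend on the unrevealed pairs, so it can be taken first *)
lemma deferred_Suc:
  "deferred V p A h G0 (Suc n) = bind_pmf (A h) (\<lambda>c. case c of
      None \<Rightarrow> return_pmf h
    | Some e \<Rightarrow> bind_pmf (Pi_pmf (unprobed V h) False (\<lambda>_. bernoulli_pmf p))
                 (\<lambda>G. run A (reveal V h G0 G) n (h @ [(e, reveal V h G0 G e)])))"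
  unfolding deferred_def run.simps
  by (subst bind_commute_pmf) (auto intro: bind_pmf_cong split: option.split)

lemma deferred_probe:
  assumes V: "finite V" and e: "e \<in> unprobed V h"
  shows "bind_pmf (Pi_pmf (unprobed V h) False (\<lambda>_. bernoulli_pmf p))
           (\<lambda>G. run A (reveal V h G0 G) n (h @ [(e, reveal V h G0 G e)]))
       = bind_pmf (bernoulli_pmf p) (\<lambda>b. deferred V p A (h @ [(e, b)]) (G0(e := b)) n)"
proof -
  have unprobed_after: "unprobed V (h @ [(e, b)]) = unprobed V h - {e}" for b
    by (auto simp: unprobed_def)
  have "finite (unprobed V h)" using finite_smcp_pairs[OF V] by (simp add: unprobed_def)
  then have split: "Pi_pmf (unprobed V h) False (\<lambda>_. bernoulli_pmf p) =
      do {b \<leftarrow> bernoulli_pmf p; f \<leftarrow> Pi_pmf (unprobed V h - {e}) False (\<lambda>_. bernoulli_pmf p);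
          return_pmf (f(e := b))}"
    using e Pi_pmf_insert'[of "unprobed V h - {e}" e False] by (simp add: insert_absorb)
  have reveal_upd: "reveal V h G0 (f(e := b)) = reveal V (h @ [(e, b)]) (G0(e := b)) f" for f b
    using e by (auto simp: reveal_def unprobed_after fun_eq_iff)
  have reveal_e: "reveal V h G0 (f(e := b)) e = b" for f b
    using e by (simp add: reveal_def)
  show ?thesis
    unfolding split deferred_def
    by (simp add: bind_assoc_pmf bind_return_pmf reveal_upd unprobed_after reveal_e[unfolded reveal_upd])
qed

lemma expectation_deferred_Suc:
  assumes V: "finite V" and p: "0 \<le> p" "p \<le> 1"
    and probes: "\<And>e. Some e \<in> set_pmf (A h) \<Longrightarrow> e \<in> unprobed V h"
  shows "measure_pmf.expectation (deferred V p A h G0 (Suc n)) msize =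
         measure_pmf.expectation (A h) (\<lambda>c. case c of
            None \<Rightarrow> msize h
          | Some e \<Rightarrow> p * measure_pmf.expectation (deferred V p A (h @ [(e, True)]) (G0(e := True)) n) msize
                    + (1 - p) * measure_pmf.expectation (deferred V p A (h @ [(e, False)]) (G0(e := False)) n) msize)"
  (is "_ = measure_pmf.expectation (A h) ?step")
proof -
  define K where "K c = (case c of None \<Rightarrow> return_pmf h
    | Some e \<Rightarrow> bind_pmf (Pi_pmf (unprobed V h) False (\<lambda>_. bernoulli_pmf p))
                 (\<lambda>G. run A (reveal V h G0 G) n (h @ [(e, reveal V h G0 G e)])))" for c
  have "measure_pmf.expectation (deferred V p A h G0 (Suc n)) msize =
        measure_pmf.expectation (A h) (\<lambda>c. measure_pmf.expectation (K c) msize)"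
  proof (unfold deferred_Suc K_def[symmetric], rule expectation_bind_pmf)
    fix c y assume "y \<in> set_pmf (K c)"
    then have "length y \<le> length h + Suc n" unfolding K_def using run_length
      by (fastforce split: option.splits)
    then show "\<bar>msize y\<bar> \<le> real (length h + Suc n)" using matching_size_le_length[of y] by simp
  qed
  also have "\<dots> = measure_pmf.expectation (A h) ?step"
  proof (rule integral_cong_AE, simp, simp, rule AE_pmfI)
    fix c assume c: "c \<in> set_pmf (A h)"
    show "measure_pmf.expectation (K c) msize = ?step c"
    proof (cases c)
      case (Some e)
      have "measure_pmf.expectation (K c) msize = measure_pmf.expectation (bernoulli_pmf p)
              (\<lambda>b. measure_pmf.expectation (deferred V p A (h @ [(e, b)]) (G0(e := b)) n) msize)"
        unfolding K_def Some option.case deferred_probe[OF V probes[OF c[unfolded Some]]]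
        using msize_deferred_bounded by (intro expectation_bind_pmf) fastforce
      then show ?thesis using Some p by (simp add: algebra_simps)
    qed (simp add: K_def)
  qed
  finally show ?thesis .
qed

lemma alg_value_deferred:
  assumes V: "finite V"
  shows "alg_value V p A =
         measure_pmf.expectation (deferred V p A [] (\<lambda>_. False) (card (smcp_pairs V))) msize"
proof -
  let ?N = "card (smcp_pairs V)"
  let ?graph = "Pi_pmf (smcp_pairs V) False (\<lambda>_. bernoulli_pmf p)"
  have "alg_value V p A = measure_pmf.expectation (bind_pmf ?graph (\<lambda>G. run A G ?N [])) msize"
    unfolding alg_value_def random_graph_def
  proof (rule expectation_bind_pmf[symmetric])
    fix G y assume "y \<in> set_pmf (run A G ?N [])"
    then show "\<bar>msize y\<bar> \<le> real ?N"
      using run_length[of y] matching_size_le_length[of y] by fastforce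
  qed
  also have "\<dots> = measure_pmf.expectation (deferred V p A [] (\<lambda>_. False) ?N) msize"
  proof -
    have "deferred V p A [] (\<lambda>_. False) ?N =
          bind_pmf (map_pmf (\<lambda>f x. if x \<in> smcp_pairs V then f x else False) ?graph)
            (\<lambda>G. run A G ?N [])"
      unfolding deferred_def bind_map_pmf by (simp add: reveal_def unprobed_def)
    then show ?thesis using Pi_pmf_default_swap[OF finite_smcp_pairs[OF V], of False False] by simp
  qed
  finally show ?thesis .
qed

section \<open>The Bellman principle for an arbitrary vertex set\<close>

definition avail :: "nat set \<Rightarrow> history \<Rightarrow> nat set set" where
  "avail V h = {e \<in> smcp_pairs V. e \<notin> fst ` set h \<and> e \<inter> matched h = {}}"

lemma avail_subset: "avail V h \<subseteq> smcp_pairs V"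
  by (auto simp: avail_def)

lemma avail_Nil: "avail V [] = smcp_pairs V"
  by (simp add: avail_def matched_def)

lemma avail_append_False: "avail V (h @ [(e, False)]) = avail V h - {e}"
  by (auto simp: avail_def matched_append)

lemma avail_append_True: "avail V (h @ [(e, True)]) = {x \<in> avail V h. x \<inter> e = {}}"
  by (auto simp: avail_def matched_append dest: smcp_pair_nonempty)

(* each probe removes at least the probed pair; this bounds the length of greedy runs *)
lemma avail_append_subset: "avail V (h @ [(e, b)]) \<subseteq> avail V h - {e}"
proof (cases b)
  case True
  have "e \<inter> e \<noteq> {}" if "e \<in> avail V h" using that avail_subset smcp_pair_nonempty by blast
  then show ?thesis using True by (auto simp: avail_append_True)
qed (simp add: avail_append_False)

lemma valid_alg_probes_avail:
  assumes "valid_alg V A" "Some e \<in> set_pmf (A h)"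
  shows "e \<in> avail V h"
  using assms unfolding valid_alg_def avail_def by blast

lemma avail_unprobed: "e \<in> avail V h \<Longrightarrow> e \<in> unprobed V h"
  by (simp add: avail_def unprobed_def)

(* a valid algorithm has finitely many possible moves, so its expectations are finite sums *)
lemma valid_alg_finite_choices:
  assumes "finite V" "valid_alg V A"
  shows "finite (set_pmf (A h))"
proof -
  have "c \<in> insert None (Some ` smcp_pairs V)" if "c \<in> set_pmf (A h)" for c
  proof (cases c)
    case (Some e)
    then have "e \<in> smcp_pairs V" using that valid_alg_probes_avail[OF assms(2)] avail_subset by blast
    then show ?thesis using Some by blast
  qed simp
  then have "set_pmf (A h) \<subseteq> insert None (Some ` smcp_pairs V)" by blast
  then show ?thesis using finite_smcp_pairs[OF assms(1)] finite_subset by blast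
qed

(* expected final matching size of probing e first when W values what remains afterwards *)
definition bellman_step :: "real \<Rightarrow> (nat set set \<Rightarrow> real) \<Rightarrow> nat set set \<Rightarrow> nat set \<Rightarrow> real" where
  "bellman_step p W R e = p * (1 + W {x \<in> R. x \<inter> e = {}}) + (1 - p) * W (R - {e})"

definition supersolution :: "nat set \<Rightarrow> real \<Rightarrow> (nat set set \<Rightarrow> real) \<Rightarrow> bool" where
  "supersolution V p W \<longleftrightarrow>
     (\<forall>R \<subseteq> smcp_pairs V. 0 \<le> W R \<and> (\<forall>e \<in> R. bellman_step p W R e \<le> W R))"

definition attained :: "nat set \<Rightarrow> real \<Rightarrow> (nat set set \<Rightarrow> real) \<Rightarrow> bool" where
  "attained V p W \<longleftrightarrow>
     W {} = 0 \<and> (\<forall>R \<subseteq> smcp_pairs V. R \<noteq> {} \<longrightarrow> (\<exists>e \<in> R. bellman_step p W R e = W R))"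

lemma bellman_step_history:
  assumes "e \<in> avail V h"
  shows "p * (msize (h @ [(e, True)]) + W (avail V (h @ [(e, True)])))
         + (1 - p) * (msize (h @ [(e, False)]) + W (avail V (h @ [(e, False)])))
       = msize h + bellman_step p W (avail V h) e"
proof -
  have "e \<notin> fst ` set h" using assms by (simp add: avail_def)
  then show ?thesis
    by (simp add: matching_size_append_True matching_size_append_False avail_append_True
        avail_append_False bellman_step_def algebra_simps)
qed

lemma deferred_upper_bound:
  assumes V: "finite V" and p: "0 \<le> p" "p \<le> 1"
    and W: "supersolution V p W" and A: "valid_alg V A"
  shows "measure_pmf.expectation (deferred V p A h G0 n) msize \<le> msize h + W (avail V h)"
proof -
  have W_nonneg: "0 \<le> W (avail V h')" for h'
    using W avail_subset by (simp add: supersolution_def)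
  show ?thesis
  proof (induction n arbitrary: h G0)
    case 0
    then show ?case using W_nonneg by (simp add: deferred_0)
  next
    case (Suc n)
    let ?E = "\<lambda>h' G'. measure_pmf.expectation (deferred V p A h' G' n) msize"
    have "measure_pmf.expectation (deferred V p A h G0 (Suc n)) msize =
          measure_pmf.expectation (A h) (\<lambda>c. case c of None \<Rightarrow> msize h
            | Some e \<Rightarrow> p * ?E (h @ [(e, True)]) (G0(e := True))
                      + (1 - p) * ?E (h @ [(e, False)]) (G0(e := False)))"
      (is "_ = measure_pmf.expectation _ ?step")
      using V p valid_alg_probes_avail[OF A] avail_unprobed by (intro expectation_deferred_Suc) blast+
    also have "\<dots> \<le> msize h + W (avail V h)"
    proof (rule measure_pmf.integral_le_const)
      show "integrable (measure_pmf (A h)) ?step"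
        using valid_alg_finite_choices[OF V A] by (rule integrable_measure_pmf_finite)
      show "AE c in measure_pmf (A h). ?step c \<le> msize h + W (avail V h)"
      proof (rule AE_pmfI)
        fix c assume c: "c \<in> set_pmf (A h)"
        show "?step c \<le> msize h + W (avail V h)"
        proof (cases c)
          case None
          then show ?thesis using W_nonneg by simp
        next
          case (Some e)
          have e: "e \<in> avail V h" using valid_alg_probes_avail[OF A] c Some by blast
          have "?step c \<le> p * (msize (h @ [(e, True)]) + W (avail V (h @ [(e, True)])))
                + (1 - p) * (msize (h @ [(e, False)]) + W (avail V (h @ [(e, False)])))"
            using Some Suc.IH p by (simp, intro add_mono mult_left_mono) simp_all
          also have "\<dots> = msize h + bellman_step p W (avail V h) e"
            using e by (rule bellman_step_history)
          also have "\<dots> \<le> msize h + W (avail V h)"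
            using W e avail_subset by (simp add: supersolution_def)
          finally show ?thesis .
        qed
      qed
    qed
    finally show ?case .
  qed
qed

definition greedy :: "real \<Rightarrow> (nat set set \<Rightarrow> real) \<Rightarrow> nat set \<Rightarrow> algorithm" where
  "greedy p W V h = return_pmf (if avail V h = {} then None
     else Some (SOME e. e \<in> avail V h \<and> bellman_step p W (avail V h) e = W (avail V h)))"

lemma greedy_choice:
  assumes W: "attained V p W" and nonempty: "avail V h \<noteq> {}"
  obtains e where "greedy p W V h = return_pmf (Some e)" and "e \<in> avail V h"
    and "bellman_step p W (avail V h) e = W (avail V h)"
proof -
  let ?optimal = "\<lambda>e. e \<in> avail V h \<and> bellman_step p W (avail V h) e = W (avail V h)"
  have "\<forall>R \<subseteq> smcp_pairs V. R \<noteq> {} \<longrightarrow> (\<exists>e \<in> R. bellman_step p W R e = W R)"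
    using W by (simp add: attained_def)
  then have "\<exists>e \<in> avail V h. bellman_step p W (avail V h) e = W (avail V h)"
    using avail_subset nonempty by blast
  then have "\<exists>e. ?optimal e" by blast
  then have "?optimal (SOME e. ?optimal e)" by (rule someI_ex)
  moreover have "greedy p W V h = return_pmf (Some (SOME e. ?optimal e))"
    using nonempty by (simp add: greedy_def)
  ultimately show ?thesis using that by blast
qed

lemma greedy_valid:
  assumes "attained V p W"
  shows "valid_alg V (greedy p W V)"
  unfolding valid_alg_def
proof (intro allI ballI impI)
  fix h c e assume c: "c \<in> set_pmf (greedy p W V h)" and "c = Some e"
  then have "avail V h \<noteq> {}" by (cases "avail V h = {}") (simp_all add: greedy_def)
  with assms obtain e' where "greedy p W V h = return_pmf (Some e')" "e' \<in> avail V h"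
    by (rule greedy_choice)
  then have "e \<in> avail V h" using c \<open>c = Some e\<close> by simp
  then show "e \<in> smcp_pairs V \<and> e \<notin> fst ` set h \<and> e \<inter> matched h = {}"
    by (simp add: avail_def)
qed

lemma deferred_greedy:
  assumes V: "finite V" and p: "0 \<le> p" "p \<le> 1" and W: "attained V p W"
  shows "card (avail V h) \<le> n \<Longrightarrow>
    measure_pmf.expectation (deferred V p (greedy p W V) h G0 n) msize = msize h + W (avail V h)"
proof (induction n arbitrary: h G0)
  case 0
  then have "avail V h = {}"
    using finite_subset[OF avail_subset finite_smcp_pairs[OF V]] by simp
  then show ?case using W by (simp add: deferred_0 attained_def)
next
  case (Suc n)
  have probes: "Some e \<in> set_pmf (greedy p W V h) \<Longrightarrow> e \<in> unprobed V h" for e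
    using greedy_valid[OF W] valid_alg_probes_avail avail_unprobed by blast
  let ?E = "\<lambda>h' G'. measure_pmf.expectation (deferred V p (greedy p W V) h' G' n) msize"
  have step: "measure_pmf.expectation (deferred V p (greedy p W V) h G0 (Suc n)) msize =
      measure_pmf.expectation (greedy p W V h) (\<lambda>c. case c of None \<Rightarrow> msize h
        | Some e \<Rightarrow> p * ?E (h @ [(e, True)]) (G0(e := True))
                  + (1 - p) * ?E (h @ [(e, False)]) (G0(e := False)))"
    by (rule expectation_deferred_Suc[OF V p probes])
  show ?case
  proof (cases "avail V h = {}")
    case True
    then have "greedy p W V h = return_pmf None" by (simp add: greedy_def)
    then show ?thesis using True W by (simp add: step attained_def)
  next
    case False
    obtain e where choice: "greedy p W V h = return_pmf (Some e)" and e: "e \<in> avail V h"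
      and optimal: "bellman_step p W (avail V h) e = W (avail V h)"
      using greedy_choice[OF W False] by blast
    have IH: "measure_pmf.expectation (deferred V p (greedy p W V) (h @ [(e, b)]) (G0(e := b)) n) msize
            = msize (h @ [(e, b)]) + W (avail V (h @ [(e, b)]))" for b
    proof (rule Suc.IH)
      have fin: "finite (avail V h)" using finite_subset[OF avail_subset finite_smcp_pairs[OF V]] .
      then have "card (avail V (h @ [(e, b)])) \<le> card (avail V h - {e})"
        by (intro card_mono avail_append_subset) simp
      then show "card (avail V (h @ [(e, b)])) \<le> n" using Suc.prems e fin by simp
    qed
    have "measure_pmf.expectation (deferred V p (greedy p W V) h G0 (Suc n)) msize =
        p * (msize (h @ [(e, True)]) + W (avail V (h @ [(e, True)])))
        + (1 - p) * (msize (h @ [(e, False)]) + W (avail V (h @ [(e, False)])))"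
      unfolding step choice by (simp only: expectation_return_pmf option.case IH)
    also have "\<dots> = msize h + W (avail V h)"
      using bellman_step_history[OF e] optimal by simp
    finally show ?thesis .
  qed
qed

theorem optimal_value_by_bellman:
  assumes V: "finite V" and p: "0 \<le> p" "p \<le> 1"
    and super: "supersolution V p W" and att: "attained V p W"
  shows "(\<exists>A. valid_alg V A \<and> alg_value V p A = W (smcp_pairs V))
       \<and> (\<forall>A. valid_alg V A \<longrightarrow> alg_value V p A \<le> W (smcp_pairs V))"
proof (intro conjI exI allI impI)
  show "valid_alg V (greedy p W V)" using att by (rule greedy_valid)
  show "alg_value V p (greedy p W V) = W (smcp_pairs V)"
    using deferred_greedy[OF V p att, of "[]" "card (smcp_pairs V)"]
    by (simp add: alg_value_deferred[OF V] avail_Nil matching_size_def)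
next
  fix A assume "valid_alg V A"
  then show "alg_value V p A \<le> W (smcp_pairs V)"
    using deferred_upper_bound[OF V p super, of A "[]"]
    by (simp add: alg_value_deferred[OF V] avail_Nil matching_size_def)
qed

section \<open>Four vertices\<close>

abbreviation pairs4 :: "nat set set" where
  "pairs4 \<equiv> smcp_pairs {0..<4}"

(* the complementary pair; e and partner e form a perfect matching of {0..<4} *)
definition partner :: "nat set \<Rightarrow> nat set" where
  "partner e = {0..<4} - e"

lemma card_pairs4: "card pairs4 = 6"
proof -
  have "card pairs4 = card {0..<4::nat} choose 2"
    unfolding smcp_pairs_def by (rule n_subsets) simp
  then show ?thesis by (simp add: numeral_eq_Suc)
qed

lemma partner_pair:
  assumes "e \<in> pairs4"
  shows "partner e \<in> pairs4" "partner e \<noteq> e" "partner (partner e) = e"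
proof -
  have sub: "e \<subseteq> {0..<4}" and card: "card e = 2" using assms by (auto simp: smcp_pairs_def)
  then have "card ({0..<4::nat} - e) = 2" by (simp add: card_Diff_subset finite_subset)
  then show "partner e \<in> pairs4" by (simp add: smcp_pairs_def partner_def)
  have "e \<noteq> {}" using card by auto
  then show "partner e \<noteq> e" by (auto simp: partner_def)
  show "partner (partner e) = e" using sub by (auto simp: partner_def)
qed

lemma disjoint_pair_is_partner:
  assumes e: "e \<in> pairs4" and x: "x \<in> pairs4" and disjoint: "x \<inter> e = {}"
  shows "x = partner e"
proof (rule card_subset_eq)
  show "x \<subseteq> partner e" using x disjoint by (auto simp: smcp_pairs_def partner_def)
  show "card x = card (partner e)"
    using x partner_pair(1)[OF e] by (simp add: smcp_pairs_def)
qed (simp add: partner_def)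

lemma disjoint_pairs4:
  assumes "R \<subseteq> pairs4" "e \<in> pairs4"
  shows "{x \<in> R. x \<inter> e = {}} = R \<inter> {partner e}"
  using assms disjoint_pair_is_partner by (auto simp: partner_def)

definition paired :: "nat set set \<Rightarrow> nat" where
  "paired R = card {e \<in> R. partner e \<in> R}"

definition unpaired :: "nat set set \<Rightarrow> nat" where
  "unpaired R = card {e \<in> R. partner e \<notin> R}"

(* Optimal value with a paired and b unpaired available pairs.  Probing a paired pair gains an
   edge and then its partner (worth p), or on failure turns the partner into an unpaired pair;
   probing an unpaired pair gains an edge and ends, or on failure just removes it. *)
function opt :: "real \<Rightarrow> nat \<Rightarrow> nat \<Rightarrow> real" where
  "opt p a b = max (if 2 \<le> a then p * (1 + p) + (1 - p) * opt p (a - 2) (b + 1) else 0)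
                   (if 0 < b then p + (1 - p) * opt p a (b - 1) else 0)"
  by auto
termination by (relation "Wellfounded.measure (\<lambda>(p, a, b). 2 * a + b)") auto

declare opt.simps [simp del]

lemma opt_nonneg:
  assumes "0 \<le> p" "p \<le> 1"
  shows "0 \<le> opt p a b"
  using assms
proof (induction p a b rule: opt.induct)
  case (1 p a b)
  have "0 \<le> p * (1 + p) + (1 - p) * opt p (a - 2) (b + 1)" if "2 \<le> a"
    using 1 that by (intro add_nonneg_nonneg mult_nonneg_nonneg) simp_all
  then show ?case by (subst opt.simps) (auto simp: le_max_iff_disj)
qed

lemma opt_0_0: "opt p 0 0 = 0"
  by (subst opt.simps) simp

definition value4 :: "real \<Rightarrow> nat set set \<Rightarrow> real" where
  "value4 p R = opt p (paired R) (unpaired R)"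

lemma value4_unfold:
  "value4 p R = max (if 2 \<le> paired R then p * (1 + p) + (1 - p) * opt p (paired R - 2) (unpaired R + 1) else 0)
                    (if 0 < unpaired R then p + (1 - p) * opt p (paired R) (unpaired R - 1) else 0)"
  unfolding value4_def by (rule opt.simps)

lemma value4_empty: "value4 p {} = 0"
  by (simp add: value4_def paired_def unpaired_def opt_0_0)

lemma value4_single:
  assumes "0 \<le> p" "c \<in> pairs4"
  shows "value4 p {c} = p"
proof -
  have "{e \<in> {c}. partner e \<in> {c}} = {}" "{e \<in> {c}. partner e \<notin> {c}} = {c}"
    using partner_pair(2)[OF assms(2)] by auto
  then have "paired {c} = 0" "unpaired {c} = 1" by (simp_all add: paired_def unpaired_def)
  moreover have "opt p 0 1 = p" using assms(1) by (subst opt.simps) (simp add: opt_0_0)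
  ultimately show ?thesis by (simp add: value4_def)
qed

lemma value4_pairs4: "value4 p pairs4 = opt p 6 0"
proof -
  have "{e \<in> pairs4. partner e \<in> pairs4} = pairs4" "{e \<in> pairs4. partner e \<notin> pairs4} = {}"
    using partner_pair(1) by blast+
  then show ?thesis unfolding value4_def paired_def unpaired_def by (simp only: card_pairs4 card.empty)
qed

lemma remove_paired:
  assumes R: "R \<subseteq> pairs4" and e: "e \<in> R" "partner e \<in> R"
  shows "2 \<le> paired R" "paired (R - {e}) = paired R - 2" "unpaired (R - {e}) = unpaired R + 1"
proof -
  let ?P = "{x \<in> R. partner x \<in> R}" and ?U = "{x \<in> R. partner x \<notin> R}"
  have fin: "finite R" using R finite_subset finite_smcp_pairs by blast
  have ne: "partner e \<noteq> e" and involution: "\<And>x. x \<in> R \<Longrightarrow> partner (partner x) = x"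
    using partner_pair R e by blast+
  have partner_eq: "partner x = e \<longleftrightarrow> x = partner e" if "x \<in> R" for x
    using involution e that by metis
  have sub: "{e, partner e} \<subseteq> ?P" using e involution by auto
  have two: "card {e, partner e} = 2" using ne by simp
  show "2 \<le> paired R" unfolding paired_def using card_mono[OF _ sub] fin two by simp
  have "{x \<in> R - {e}. partner x \<in> R - {e}} = ?P - {e, partner e}" using partner_eq by blast
  then show "paired (R - {e}) = paired R - 2"
    unfolding paired_def using card_Diff_subset[OF _ sub] two by simp
  have "{x \<in> R - {e}. partner x \<notin> R - {e}} = insert (partner e) ?U" using partner_eq e ne by blast
  moreover have "partner e \<notin> ?U" using e involution by simp
  ultimately show "unpaired (R - {e}) = unpaired R + 1" unfolding unpaired_def using fin by simp
qed

lemma remove_unpaired: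
  assumes R: "R \<subseteq> pairs4" and e: "e \<in> R" "partner e \<notin> R"
  shows "1 \<le> unpaired R" "paired (R - {e}) = paired R" "unpaired (R - {e}) = unpaired R - 1"
proof -
  let ?P = "{x \<in> R. partner x \<in> R}" and ?U = "{x \<in> R. partner x \<notin> R}"
  have fin: "finite R" using R finite_subset finite_smcp_pairs by blast
  have involution: "\<And>x. x \<in> R \<Longrightarrow> partner (partner x) = x" using partner_pair R by blast
  have mem: "e \<in> ?U" using e by simp
  then have "?U \<noteq> {}" by blast
  then show "1 \<le> unpaired R" unfolding unpaired_def using fin by (simp add: Suc_le_eq card_gt_0_iff)
  have "{x \<in> R - {e}. partner x \<in> R - {e}} = ?P" using involution e by force
  then show "paired (R - {e}) = paired R" by (simp add: paired_def)
  have "{x \<in> R - {e}. partner x \<notin> R - {e}} = ?U - {e}" using involution e by force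
  then show "unpaired (R - {e}) = unpaired R - 1" unfolding unpaired_def using mem fin by simp
qed

lemma bellman_step_value4:
  assumes p: "0 \<le> p" and R: "R \<subseteq> pairs4" and e: "e \<in> R"
  shows "bellman_step p (value4 p) R e =
    (if partner e \<in> R then p * (1 + p) + (1 - p) * opt p (paired R - 2) (unpaired R + 1)
     else p + (1 - p) * opt p (paired R) (unpaired R - 1))"
proof -
  have e4: "e \<in> pairs4" using R e by blast
  show ?thesis
  proof (cases "partner e \<in> R")
    case True
    then have disjoint: "{x \<in> R. x \<inter> e = {}} = {partner e}" using disjoint_pairs4[OF R e4] by blast
    have "value4 p {partner e} = p" using value4_single[OF p partner_pair(1)[OF e4]] .
    then show ?thesis using True remove_paired[OF R e True]
      unfolding bellman_step_def disjoint by (simp add: value4_def)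
  next
    case False
    then have disjoint: "{x \<in> R. x \<inter> e = {}} = {}" using disjoint_pairs4[OF R e4] by simp
    show ?thesis using False remove_unpaired[OF R e False]
      unfolding bellman_step_def disjoint value4_empty by (simp add: value4_def)
  qed
qed

lemma value4_supersolution:
  assumes "0 \<le> p" "p \<le> 1"
  shows "supersolution {0..<4} p (value4 p)"
  unfolding supersolution_def
proof (intro allI impI conjI ballI)
  fix R e assume R: "R \<subseteq> pairs4" and e: "e \<in> R"
  show "bellman_step p (value4 p) R e \<le> value4 p R"
  proof (cases "partner e \<in> R")
    case True
    then show ?thesis using remove_paired(1)[OF R e True]
      by (simp add: bellman_step_value4[OF assms(1) R e] value4_unfold)
  next
    case False
    then show ?thesis using remove_unpaired(1)[OF R e False]
      by (simp add: bellman_step_value4[OF assms(1) R e] value4_unfold)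
  qed
qed (simp add: value4_def opt_nonneg[OF assms])

lemma value4_attained:
  assumes p: "0 \<le> p" "p \<le> 1"
  shows "attained {0..<4} p (value4 p)"
  unfolding attained_def
proof (intro conjI allI impI)
  show "value4 p {} = 0" by (rule value4_empty)
next
  fix R assume R: "R \<subseteq> pairs4" and nonempty: "R \<noteq> {}"
  define full where "full = p * (1 + p) + (1 - p) * opt p (paired R - 2) (unpaired R + 1)"
  define half where "half = p + (1 - p) * opt p (paired R) (unpaired R - 1)"
  have nonneg: "0 \<le> full" "0 \<le> half" using opt_nonneg[OF p] p by (simp_all add: full_def half_def)
  have step: "bellman_step p (value4 p) R e = (if partner e \<in> R then full else half)" if "e \<in> R" for e
    using bellman_step_value4[OF p(1) R that] by (simp add: full_def half_def)
  have value_eq: "value4 p R = max (if 2 \<le> paired R then full else 0) (if 0 < unpaired R then half else 0)"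
    by (simp add: value4_unfold full_def half_def)
  show "\<exists>e \<in> R. bellman_step p (value4 p) R e = value4 p R"
  proof (cases "2 \<le> paired R \<and> (unpaired R = 0 \<or> half \<le> full)")
    case True
    then have "{e \<in> R. partner e \<in> R} \<noteq> {}" unfolding paired_def by (metis card.empty not_numeral_le_zero)
    then obtain e where "e \<in> R" "partner e \<in> R" by blast
    then show ?thesis using True nonneg step value_eq by (intro bexI[of _ e]) auto
  next
    case False
    obtain e where e: "e \<in> R" using nonempty by blast
    have "0 < unpaired R"
    proof (rule ccontr)
      assume "\<not> 0 < unpaired R"
      then have "partner e \<in> R"
        using remove_unpaired(1)[OF R e] by (cases "partner e \<in> R") simp_all
      then show False using remove_paired(1)[OF R e] False \<open>\<not> 0 < unpaired R\<close> by simp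
    qed
    then have "{e \<in> R. partner e \<notin> R} \<noteq> {}" unfolding unpaired_def by (metis card.empty less_irrefl)
    then obtain e' where "e' \<in> R" "partner e' \<notin> R" by blast
    then show ?thesis using False nonneg step value_eq \<open>0 < unpaired R\<close> by (intro bexI[of _ e']) auto
  qed
qed

lemma opt_6_0: "opt (16/25) 6 0 = 392569184 / 244140625"
proof -
  let ?p = "16/25 :: real"
  have o01: "opt ?p 0 1 = 16/25" by (subst opt.simps) (simp add: opt_0_0)
  have o02: "opt ?p 0 2 = 544/625" using o01 by (subst opt.simps) (simp add: eval_nat_numeral)
  have o03: "opt ?p 0 3 = 14896/15625" using o02 by (subst opt.simps) (simp add: eval_nat_numeral)
  have o20: "opt ?p 2 0 = 32/25" using o01 by (subst opt.simps) (simp add: eval_nat_numeral)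
  have o21: "opt ?p 2 1 = 21296/15625" using o02 o20 by (subst opt.simps) (simp add: eval_nat_numeral)
  have o22: "opt ?p 2 2 = 544064/390625" using o03 o21 by (subst opt.simps) (simp add: eval_nat_numeral)
  have o40: "opt ?p 4 0 = 601664/390625" using o21 by (subst opt.simps) (simp add: eval_nat_numeral)
  have o41: "opt ?p 4 1 = 15146576/9765625"
    using o22 o40 by (subst opt.simps) (simp add: eval_nat_numeral)
  show ?thesis using o41 by (subst opt.simps) (simp add: eval_nat_numeral)
qed

theorem lemma6:
  fixes p :: real
  defines "p \<equiv> 0.64"
  shows "(\<exists>A. valid_alg {0..<4} A \<and>
            alg_value {0..<4} p A =
              p + p^2 + (1-p)*p*(1+p) + (1-p)^2*p*(1+p) + (1-p)^3*(1-(1-p)^3))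
       \<and> (\<forall>A. valid_alg {0..<4} A \<longrightarrow>
            alg_value {0..<4} p A \<le>
              p + p^2 + (1-p)*p*(1+p) + (1-p)^2*p*(1+p) + (1-p)^3*(1-(1-p)^3))"
proof -
  have p: "p = 16/25" by (simp add: p_def)
  have range: "0 \<le> p" "p \<le> 1" by (simp_all add: p)
  have closed_form: "value4 p pairs4 = p + p^2 + (1-p)*p*(1+p) + (1-p)^2*p*(1+p) + (1-p)^3*(1-(1-p)^3)"
    unfolding value4_pairs4 p opt_6_0 by (simp add: power_numeral_reduce)
  show ?thesis
    using optimal_value_by_bellman[OF finite_atLeastLessThan range
            value4_supersolution[OF range] value4_attained[OF range]]
    unfolding closed_form .
qed

end
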